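(* In the stochastic extra-point scheme (defined in the context), choose $(\alpha,\beta,\gamma,\eta,\tau)=\big(\frac1{4L},\frac1{64\kappa},\frac1{64\kappa},\frac1{4L},\frac1{64L\kappa}\big)$. Then for all $k\ge0$, $$\mathbb E\big[\|z^k-z^*\|^2\big]\le\Big(1-\frac1{256\kappa}\Big)^k\cdot\frac{283}{256}\|z^0-z^*\|^2+\Big(\frac{40\sigma^2}{63L^2}+\frac{32\delta D}{63L}\Big)\cdot 256\kappa.$$
   Context: Let $\mathcal Z\subseteq\mathbb R^n$ be a nonempty closed convex set with $\|z-z'\|\le D$ for all $z,z'\in\mathcal Z$. Let $F:\mathcal Z\to\mathbb R^n$ satisfy $(F(z)-F(z'))^\top(z-z')\ge\mu\|z-z'\|^2$ and $\|F(z)-F(z')\|\le L\|z-z'\|$ for all $z,z'\in\mathcal Z$, where $0<\mu\le L$; write $\kappa=L/\mu$. Let $z^*$ be the unique point of $\mathcal Z$ with $F(z^* )^\top(z-z^* )\ge 0$ for all $z\in\mathcal Z$. $P_{\mathcal Z}$ denotes Euclidean projection onto $\mathcal Z$. A stochastic oracle returns $\hat F(z,\xi)$ for a random sample $\xi$, and satisfies, for every $z\in\mathcal Z$, $\mathbb E_\xi\|\hat F(z,\xi)-F(z)\|\le\delta$ and $\mathbb E_\xi\|\hat F(z,\xi)-F(z)\|^2\le\sigma^2$ for constants $\delta,\sigma\ge0$. Each oracle call $\hat F(z^j)$ means $\hat F(z^j,\xi^j)$ with a fresh sample independent of all previous samples. The stochastic extra-point scheme: starting from $z^0\in\mathcal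 Z$, with $z^{-1}:=z^0$ and $\hat F(z^{-1}):=\hat F(z^0)$, for $k\ge0$: $z^{k+0.5}=P_{\mathcal Z}(z^k+\beta(z^k-z^{k-1})-\eta\hat F(z^k))$ and $z^{k+1}=P_{\mathcal Z}(z^k-\alpha\hat F(z^{k+0.5})+\gamma(z^k-z^{k-1})-\tau(\hat F(z^k)-\hat F(z^{k-1})))$. *)

theory Defs
  imports "HOL-Analysis.Analysis" "HOL-Probability.Probability"
begin

text \<open>State of the stochastic extra-point scheme after k steps, driven by the
  sample sequence w (w (2k) is the sample used for the call at z^k,
  w (2k+1) the sample used for the call at z^(k+0.5)).
  Returns (z^k, z^(k-1), Fhat(z^(k-1))), with z^(-1) = z^0 and
  Fhat(z^(-1)) = Fhat(z^0) (the very same oracle value).\<close>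
fun sep_state ::
  "'a::euclidean_space set \<Rightarrow> ('a \<Rightarrow> 'b \<Rightarrow> 'a) \<Rightarrow> real \<Rightarrow> real \<Rightarrow> real \<Rightarrow> real \<Rightarrow> real
   \<Rightarrow> 'a \<Rightarrow> (nat \<Rightarrow> 'b) \<Rightarrow> nat \<Rightarrow> 'a \<times> 'a \<times> 'a" where
  "sep_state Z Fh \<alpha> \<beta> \<gamma> \<eta> \<tau> z0 w 0 = (z0, z0, Fh z0 (w 0))"
| "sep_state Z Fh \<alpha> \<beta> \<gamma> \<eta> \<tau> z0 w (Suc k) =
     (let (z, zp, gp) = sep_state Z Fh \<alpha> \<beta> \<gamma> \<eta> \<tau> z0 w k;
          g = Fh z (w (2 * k));
          zh = closest_point Z (z + \<beta> *\<^sub>R (z - zp) - \<eta> *\<^sub>R g);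
          gh = Fh zh (w (2 * k + 1));
          zn = closest_point Z (z - \<alpha> *\<^sub>R gh + \<gamma> *\<^sub>R (z - zp) - \<tau> *\<^sub>R (g - gp))
      in (zn, z, g))"

definition sep_iter ::
  "'a::euclidean_space set \<Rightarrow> ('a \<Rightarrow> 'b \<Rightarrow> 'a) \<Rightarrow> real \<Rightarrow> real \<Rightarrow> real \<Rightarrow> real \<Rightarrow> real
   \<Rightarrow> 'a \<Rightarrow> nat \<Rightarrow> (nat \<Rightarrow> 'b) \<Rightarrow> 'a" where
  "sep_iter Z Fh \<alpha> \<beta> \<gamma> \<eta> \<tau> z0 k w = fst (sep_state Z Fh \<alpha> \<beta> \<gamma> \<eta> \<tau> z0 w k)"

end

theory Submission
  imports Defs
begin

(* With the potential V k = |z^k - z*|^2 + |z^k - z^(k-1)|^2 / 16, the two projection inequalities of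
   one step, strong monotonicity at z^(k+0.5), Lipschitz continuity and Young's inequality give the
   deterministic recursion V (k+1) <= (1 - 1/(256 kappa)) V k + N k, where N k is linear in the oracle
   error at z^(k+0.5) (through the diameter D) and quadratic in the oracle errors at z^k, z^(k+0.5)
   and z^(k-1). Every oracle call uses a fresh sample, independent of the point it is evaluated at,
   so Fubini on the product of the sample spaces gives E (N k) <= 32 delta D/(63 L) + 40 sigma^2/(63 L^2).
   Unrolling the recursion from V 0 = |z^0 - z*|^2 gives the bound, even without the factor 283/256. *)

lemma young_product:
  fixes x y c :: real
  assumes "0 < c"
  shows "x * y \<le> (c * x\<^sup>2 + y\<^sup>2 / c) / 2"
proof -
  have "0 \<le> (c * x - y)\<^sup>2 / c" using assms by simp
  also have "(c * x - y)\<^sup>2 / c = c * x\<^sup>2 + y\<^sup>2 / c - 2 * (x * y)"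
    using assms by (simp add: power2_eq_square field_simps)
  finally show ?thesis by simp
qed

(* In the application a = |z - zh|, b = |zh - zn|, r = |zh - z*|, q = |z - z*|, s = |zn - z*|,
   m = |z - zp|, m' = |zn - z|, and e1, e2, e3 are the oracle errors at z, zh, zp divided by L. *)
lemma extra_point_scalar_recursion:
  fixes u a b r q s m m' e1 e2 e3 x :: real
  assumes u: "0 < u" "u \<le> 1"
    and nonneg: "0 \<le> a" "0 \<le> b" "0 \<le> r" "0 \<le> m"
    and q: "0 \<le> q" "q \<le> r + a" and m': "0 \<le> m'" "m' \<le> a + b"
    and key: "s\<^sup>2 \<le> q\<^sup>2 - a\<^sup>2 - b\<^sup>2 + (a * b + e2 * b + e1 * b) / 2 - u * r\<^sup>2 / 2 + x / 2
               + (u * (r * m) + u * (s * m) + u * (s * e1) + u * (s * e3)) / 32"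
  shows "s\<^sup>2 - u * s\<^sup>2 / 64 + m'\<^sup>2 / 16
    \<le> q\<^sup>2 - 3 * (u * q\<^sup>2) / 16 + 17 * (u * m\<^sup>2) / 512 + (x / 2 + (e2\<^sup>2 + e1\<^sup>2) / 4 + (e1\<^sup>2 + e3\<^sup>2) / 16)"
proof -
  have "a * b \<le> (a\<^sup>2 + b\<^sup>2) / 2" "e2 * b \<le> (e2\<^sup>2 + b\<^sup>2) / 2" "e1 * b \<le> (e1\<^sup>2 + b\<^sup>2) / 2"
    using young_product[of 1 a b] young_product[of 1 e2 b] young_product[of 1 e1 b] by simp_all
  moreover have "u * (r * m) \<le> 4 * (u * r\<^sup>2) + u * m\<^sup>2 / 16"
    using mult_left_mono[OF young_product[of 8 r m], of u] u by (simp add: algebra_simps)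
  moreover have "u * (s * m) \<le> u * s\<^sup>2 / 4 + u * m\<^sup>2"
    using mult_left_mono[OF young_product[of "1/2" s m], of u] u by (simp add: algebra_simps)
  moreover have "u * (s * e1) \<le> u * s\<^sup>2 / 8 + 2 * (u * e1\<^sup>2)" "u * (s * e3) \<le> u * s\<^sup>2 / 8 + 2 * (u * e3\<^sup>2)"
    using mult_left_mono[OF young_product[of "1/4" s e1], of u] mult_left_mono[OF young_product[of "1/4" s e3], of u] u
    by (simp_all add: algebra_simps)
  moreover have "u * q\<^sup>2 \<le> 2 * (u * r\<^sup>2) + 2 * (u * a\<^sup>2)"
  proof -
    have "q\<^sup>2 \<le> (r + a)\<^sup>2" using q nonneg by (intro power_mono) auto
    also have "\<dots> \<le> 2 * r\<^sup>2 + 2 * a\<^sup>2" using young_product[of 1 r a] by (simp add: power2_sum)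
    finally have "u * q\<^sup>2 \<le> u * (2 * r\<^sup>2 + 2 * a\<^sup>2)" using u by (intro mult_left_mono) auto
    then show ?thesis by (simp add: algebra_simps)
  qed
  moreover have "m'\<^sup>2 \<le> 4 / 3 * a\<^sup>2 + 4 * b\<^sup>2"
  proof -
    have "m'\<^sup>2 \<le> (a + b)\<^sup>2" using m' nonneg by (intro power_mono) auto
    then show ?thesis using young_product[of "1/3" a b] by (simp add: power2_sum)
  qed
  moreover have "u * e1\<^sup>2 \<le> e1\<^sup>2" "u * e3\<^sup>2 \<le> e3\<^sup>2" "u * a\<^sup>2 \<le> a\<^sup>2"
    using u by (simp_all add: mult_left_le_one_le)
  ultimately show ?thesis using key zero_le_power2[of a] by argo
qed

lemma potential_contraction:
  fixes u S Q P M N :: real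
  assumes u: "0 < u" "u \<le> 1"
    and nonneg: "0 \<le> Q" "0 \<le> P" "0 \<le> M" "0 \<le> N"
    and recursion: "S - u * S / 64 + M / 16 \<le> Q - 3 * (u * Q) / 16 + 17 * (u * P) / 512 + N"
  shows "S + M / 16 \<le> (1 - u / 256) * (Q + P / 16) + 64 / 63 * N"
proof -
  have "(1 - u / 64) * (S + M / 16) = S - u * S / 64 + M / 16 - u * M / 1024"
    by (simp add: field_simps)
  moreover have "(1 - u / 64) * ((1 - u / 256) * (Q + P / 16) + 64 / 63 * N)
    = Q + P / 16 - 5 * (u * Q) / 256 - 5 * (u * P) / 4096 + u * (u * Q) / 16384 + u * (u * P) / 262144
      + 64 / 63 * N - u * N / 63"
    by (simp add: field_simps)
  moreover have "0 \<le> u * (u * Q)" "0 \<le> u * (u * P)" "0 \<le> u * M" "0 \<le> u * Q" "0 \<le> u * P"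
    using u nonneg by simp_all
  moreover have "u * P \<le> P" "u * N \<le> N" using u nonneg by (simp_all add: mult_left_le_one_le)
  ultimately have "(1 - u / 64) * (S + M / 16) \<le> (1 - u / 64) * ((1 - u / 256) * (Q + P / 16) + 64 / 63 * N)"
    using recursion by argo
  moreover have "0 < 1 - u / 64" using u by simp
  ultimately show ?thesis by simp
qed

lemma extra_point_three_point_inequality:
  fixes Z :: "'a::euclidean_space set" and z zp g gh gp :: 'a and \<alpha> \<beta> \<tau> :: real
  assumes closed: "closed Z" and convex: "convex Z" and zs: "zs \<in> Z"
  defines "zh \<equiv> closest_point Z (z + \<beta> *\<^sub>R (z - zp) - \<alpha> *\<^sub>R g)"
    and "zn \<equiv> closest_point Z (z - \<alpha> *\<^sub>R gh + \<beta> *\<^sub>R (z - zp) - \<tau> *\<^sub>R (g - gp))"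
  shows "(norm (zn - zs))\<^sup>2 \<le> (norm (z - zs))\<^sup>2 - (norm (z - zh))\<^sup>2 - (norm (zh - zn))\<^sup>2
      + 2 * \<alpha> * inner (gh - g) (zh - zn) + 2 * \<alpha> * inner gh (zs - zh)
      - 2 * \<beta> * inner (z - zp) (zs - zh) + 2 * \<tau> * inner (g - gp) (zs - zn)"
proof -
  have zn_in: "zn \<in> Z"
    unfolding zn_def using zs by (blast intro: closest_point_in_set[OF closed])
  have "inner ((z - \<alpha> *\<^sub>R gh + \<beta> *\<^sub>R (z - zp) - \<tau> *\<^sub>R (g - gp)) - zn) (zs - zn) \<le> 0"
    unfolding zn_def by (rule closest_point_dot[OF convex closed zs])
  moreover have "inner ((z + \<beta> *\<^sub>R (z - zp) - \<alpha> *\<^sub>R g) - zh) (zn - zh) \<le> 0"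
    unfolding zh_def by (rule closest_point_dot[OF convex closed zn_in])
  moreover have "(norm (zn - zs))\<^sup>2 - (norm (z - zs))\<^sup>2 + (norm (z - zh))\<^sup>2 + (norm (zh - zn))\<^sup>2 =
     2 * inner ((z - \<alpha> *\<^sub>R gh + \<beta> *\<^sub>R (z - zp) - \<tau> *\<^sub>R (g - gp)) - zn) (zs - zn)
   + 2 * inner ((z + \<beta> *\<^sub>R (z - zp) - \<alpha> *\<^sub>R g) - zh) (zn - zh)
   + 2 * \<alpha> * inner (gh - g) (zh - zn) + 2 * \<alpha> * inner gh (zs - zh)
   - 2 * \<beta> * inner (z - zp) (zs - zh) + 2 * \<tau> * inner (g - gp) (zs - zn)"
    by (simp add: power2_norm_eq_inner inner_diff_left inner_diff_right inner_add_left inner_add_right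
        inner_commute algebra_simps)
  ultimately show ?thesis by linarith
qed

lemma nn_integral_fresh_coordinate_le:
  fixes f :: "(nat \<Rightarrow> 'b) \<Rightarrow> 'x" and G :: "'x \<Rightarrow> 'b \<Rightarrow> ennreal"
  assumes M: "prob_space M"
    and f: "f \<in> measurable (\<Pi>\<^sub>M i\<in>UNIV. M) N"
    and prefix: "\<And>w w'. (\<And>i. i < n \<Longrightarrow> w i = w' i) \<Longrightarrow> f w = f w'"
    and G: "(\<lambda>(x, \<xi>). G x \<xi>) \<in> borel_measurable (N \<Otimes>\<^sub>M M)"
    and bound: "\<And>w. (\<integral>\<^sup>+ \<xi>. G (f w) \<xi> \<partial>M) \<le> c"
  shows "(\<integral>\<^sup>+ w. G (f w) (w n) \<partial>(\<Pi>\<^sub>M i\<in>UNIV. M)) \<le> c"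
proof -
  interpret product_prob_space "\<lambda>_. M" UNIV using M by (rule product_prob_spaceI)
  interpret prefix_space: prob_space "\<Pi>\<^sub>M i\<in>{..<n}. M" using M by (rule prob_space_PiM)
  obtain \<xi>\<^sub>0 where \<xi>\<^sub>0: "\<xi>\<^sub>0 \<in> space M" using M prob_space.not_empty by blast
  \<comment> \<open>f factors through the finite product over the coordinates below n, where Fubini
    separates coordinate n; the padding sample is never looked at.\<close>
  define J where "J = insert n {..<n}"
  define ext :: "(nat \<Rightarrow> 'b) \<Rightarrow> nat \<Rightarrow> 'b" where "ext = (\<lambda>x i. if i < n then x i else \<xi>\<^sub>0)"
  define H where "H x = G (f (ext x)) (x n)" for x
  have component: "(\<lambda>x. if i < n then x i else \<xi>\<^sub>0) \<in> measurable (\<Pi>\<^sub>M i\<in>J. M) M" for i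
    using \<xi>\<^sub>0 by (cases "i < n") (auto simp: J_def intro: measurable_component_singleton)
  have "ext \<in> measurable (\<Pi>\<^sub>M i\<in>J. M) (\<Pi>\<^sub>M i\<in>UNIV. M)"
    using measurable_restrict[of UNIV "\<lambda>i x. if i < n then x i else \<xi>\<^sub>0" _ "\<lambda>_. M", OF component]
    by (simp add: ext_def restrict_UNIV)
  then have H_measurable: "H \<in> borel_measurable (\<Pi>\<^sub>M i\<in>J. M)"
    unfolding H_def using G f
    by (intro measurable_Pair_compose_split[OF G] measurable_comp[of ext _ _ f]
             measurable_component_singleton) (auto simp: J_def)
  have "(\<integral>\<^sup>+ w. G (f w) (w n) \<partial>(\<Pi>\<^sub>M i\<in>UNIV. M)) = (\<integral>\<^sup>+ w. H (restrict w J) \<partial>(\<Pi>\<^sub>M i\<in>UNIV. M))"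
    by (intro nn_integral_cong) (auto simp: H_def J_def ext_def intro!: arg_cong2[where f=G] prefix)
  also have "\<dots> = (\<integral>\<^sup>+ x. H x \<partial>distr (\<Pi>\<^sub>M i\<in>UNIV. M) (\<Pi>\<^sub>M i\<in>J. M) (\<lambda>w. restrict w J))"
    using H_measurable by (intro nn_integral_distr[symmetric] measurable_restrict_subset) auto
  also have "\<dots> = (\<integral>\<^sup>+ x. H x \<partial>(\<Pi>\<^sub>M i\<in>J. M))"
    using distr_PiM_restrict_finite[of J] by (simp add: J_def)
  also have "\<dots> = (\<integral>\<^sup>+ x. (\<integral>\<^sup>+ \<xi>. H (x(n := \<xi>)) \<partial>M) \<partial>(\<Pi>\<^sub>M i\<in>{..<n}. M))"
    unfolding J_def using H_measurable by (intro product_nn_integral_insert) (auto simp: J_def)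
  also have "\<dots> \<le> (\<integral>\<^sup>+ x. c \<partial>(\<Pi>\<^sub>M i\<in>{..<n}. M))"
  proof (intro nn_integral_mono)
    fix x
    have "ext (x(n := \<xi>)) = ext x" for \<xi> by (auto simp: ext_def)
    then show "(\<integral>\<^sup>+ \<xi>. H (x(n := \<xi>)) \<partial>M) \<le> c" using bound by (simp add: H_def)
  qed
  also have "\<dots> = c" by (simp add: prefix_space.emeasure_space_1)
  finally show ?thesis .
qed

locale strongly_monotone_vi =
  fixes Z :: "'a::euclidean_space set" and F :: "'a \<Rightarrow> 'a" and D L \<mu> :: real and zstar :: 'a
  assumes closed: "closed Z" and convex: "convex Z"
    and diameter: "\<forall>z\<in>Z. \<forall>z'\<in>Z. norm (z - z') \<le> D"
    and strongly_monotone: "\<forall>z\<in>Z. \<forall>z'\<in>Z. (F z - F z') \<bullet> (z - z') \<ge> \<mu> * (norm (z - z'))\<^sup>2"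
    and lipschitz: "\<forall>z\<in>Z. \<forall>z'\<in>Z. norm (F z - F z') \<le> L * norm (z - z')"
    and mu_pos: "0 < \<mu>" and mu_le_L: "\<mu> \<le> L"
    and solution_in: "zstar \<in> Z"
    and solution: "\<forall>z\<in>Z. F zstar \<bullet> (z - zstar) \<ge> 0"
begin

abbreviation kappa :: real where "kappa \<equiv> L / \<mu>"

lemma L_pos: "0 < L"
  using mu_pos mu_le_L by linarith

lemma diameter_nonneg: "0 \<le> D"
  using diameter solution_in by force

lemma nonempty: "Z \<noteq> {}"
  using solution_in by blast

lemma contraction_factor_nonneg: "0 \<le> 1 - 1 / (256 * kappa)"
  using mu_pos mu_le_L L_pos by (simp add: field_simps)

lemma borel_measurable_F_closest_point: "(\<lambda>z. F (closest_point Z z)) \<in> borel_measurable borel"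
proof -
  have "continuous_on Z F"
    using lipschitz L_pos by (intro lipschitz_on_continuous_on[of L] lipschitz_onI) (auto simp: dist_norm)
  moreover have "continuous_on UNIV (closest_point Z)"
    by (rule continuous_on_closest_point[OF convex closed nonempty])
  ultimately have "continuous_on UNIV (F \<circ> closest_point Z)"
    using closest_point_in_set[OF closed nonempty] by (metis continuous_on_compose continuous_on_subset image_subset_iff)
  from borel_measurable_continuous_onI[OF this] show ?thesis by (simp add: comp_def)
qed

lemma F_feasible_measurable:
  assumes f: "f \<in> borel_measurable N" and feasible: "\<And>x. f x \<in> Z"
  shows "(\<lambda>x. F (f x)) \<in> borel_measurable N"
proof -
  have "(\<lambda>x. F (closest_point Z (f x))) \<in> borel_measurable N"
    using measurable_compose[OF f borel_measurable_F_closest_point] .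
  then show ?thesis using feasible by (simp add: closest_point_self)
qed

lemma inner_oracle_difference_le:
  assumes "z \<in> Z" "z' \<in> Z"
  shows "inner (g' - g) v \<le> (L * norm (z' - z) + norm (g' - F z') + norm (g - F z)) * norm v"
proof -
  have "norm (g' - g) \<le> norm (F z' - F z + (g' - F z')) + norm (g - F z)"
    using norm_triangle_ineq4[of "F z' - F z + (g' - F z')" "g - F z"] by simp
  also have "\<dots> \<le> norm (F z' - F z) + norm (g' - F z') + norm (g - F z)"
    by (intro add_right_mono norm_triangle_ineq)
  also have "\<dots> \<le> L * norm (z' - z) + norm (g' - F z') + norm (g - F z)"
    using lipschitz assms by simp
  finally have "norm (g' - g) \<le> L * norm (z' - z) + norm (g' - F z') + norm (g - F z)" .
  then show ?thesis
    using norm_cauchy_schwarz[of "g' - g" v] by (meson mult_right_mono norm_ge_zero order_trans)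
qed

lemma inner_oracle_toward_solution_le:
  assumes "z \<in> Z"
  shows "inner g (zstar - z) \<le> D * norm (g - F z) - \<mu> * (norm (z - zstar))\<^sup>2"
proof -
  have "inner (F z - F zstar) (z - zstar) \<ge> \<mu> * (norm (z - zstar))\<^sup>2"
    using strongly_monotone assms solution_in by blast
  moreover have "inner (F zstar) (z - zstar) \<ge> 0"
    using solution assms by blast
  moreover have "inner (g - F z) (zstar - z) \<le> norm (g - F z) * D"
    using norm_cauchy_schwarz[of "g - F z" "zstar - z"] diameter assms solution_in
    by (meson mult_left_mono norm_ge_zero order_trans)
  moreover have "inner g (zstar - z)
      = inner (g - F z) (zstar - z) - inner (F z - F zstar) (z - zstar) - inner (F zstar) (z - zstar)"
    by (simp add: inner_diff_left inner_diff_right algebra_simps)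
  ultimately show ?thesis by (simp add: algebra_simps)
qed

lemma extra_point_key_inequality:
  fixes z zp g gh gp zh zn :: 'a
  assumes z: "z \<in> Z" and zp: "zp \<in> Z"
    and zh_def: "zh = closest_point Z (z + (1 / (64 * kappa)) *\<^sub>R (z - zp) - (1 / (4 * L)) *\<^sub>R g)"
    and zn_def: "zn = closest_point Z (z - (1 / (4 * L)) *\<^sub>R gh + (1 / (64 * kappa)) *\<^sub>R (z - zp)
                                - (1 / (64 * L * kappa)) *\<^sub>R (g - gp))"
  defines "u \<equiv> \<mu> / L"
    and "a \<equiv> norm (z - zh)" and "b \<equiv> norm (zh - zn)" and "r \<equiv> norm (zh - zstar)"
    and "s \<equiv> norm (zn - zstar)" and "m \<equiv> norm (z - zp)"
    and "e \<equiv> norm (g - F z) / L" and "eh \<equiv> norm (gh - F zh) / L" and "ep \<equiv> norm (gp - F zp) / L"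
  shows "s\<^sup>2 \<le> (norm (z - zstar))\<^sup>2 - a\<^sup>2 - b\<^sup>2 + (a * b + eh * b + e * b) / 2 - u * r\<^sup>2 / 2 + D * eh / 2
      + (u * (r * m) + u * (s * m) + u * (s * e) + u * (s * ep)) / 32"
proof -
  define \<alpha> \<beta> \<tau> where "\<alpha> = 1 / (4 * L)" and "\<beta> = 1 / (64 * kappa)" and "\<tau> = 1 / (64 * L * kappa)"
  have L: "0 < L" by (rule L_pos)
  have stepsizes: "\<beta> = u / 64" "\<tau> = u / (64 * L)" "0 \<le> u"
    using L mu_pos by (auto simp: \<beta>_def \<tau>_def u_def)
  have zh_in: "zh \<in> Z"
    unfolding zh_def by (rule closest_point_in_set[OF closed nonempty])
  have "2 * \<alpha> * inner (gh - g) (zh - zn) \<le> (a * b + eh * b + e * b) / 2"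
  proof -
    have "2 * \<alpha> * inner (gh - g) (zh - zn) \<le> 2 * \<alpha> * ((L * a + L * eh + L * e) * b)"
      using inner_oracle_difference_le[OF z zh_in, of gh g "zh - zn"] L
      by (intro mult_left_mono) (auto simp: a_def b_def e_def eh_def \<alpha>_def norm_minus_commute)
    then show ?thesis using L by (simp add: \<alpha>_def field_simps)
  qed
  moreover have "2 * \<alpha> * inner gh (zstar - zh) \<le> D * eh / 2 - u * r\<^sup>2 / 2"
  proof -
    have "2 * \<alpha> * inner gh (zstar - zh) \<le> 2 * \<alpha> * (D * (L * eh) - \<mu> * r\<^sup>2)"
      using inner_oracle_toward_solution_le[OF zh_in, of gh] L
      by (intro mult_left_mono) (auto simp: r_def eh_def \<alpha>_def)
    then show ?thesis using L by (simp add: \<alpha>_def u_def field_simps)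
  qed
  moreover have "- (2 * \<beta> * inner (z - zp) (zstar - zh)) \<le> u * (r * m) / 32"
  proof -
    have "2 * \<beta> * inner (z - zp) (zh - zstar) \<le> 2 * \<beta> * (m * r)"
      using norm_cauchy_schwarz[of "z - zp" "zh - zstar"] stepsizes
      by (intro mult_left_mono) (auto simp: m_def r_def)
    then show ?thesis by (simp add: stepsizes inner_diff_right algebra_simps)
  qed
  moreover have "2 * \<tau> * inner (g - gp) (zstar - zn) \<le> (u * (s * m) + u * (s * e) + u * (s * ep)) / 32"
  proof -
    have "2 * \<tau> * inner (g - gp) (zstar - zn) \<le> 2 * \<tau> * ((L * m + L * e + L * ep) * s)"
      using inner_oracle_difference_le[OF zp z, of g gp "zstar - zn"] stepsizes L
      by (intro mult_left_mono) (auto simp: m_def s_def e_def ep_def norm_minus_commute)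
    then show ?thesis using L by (simp add: stepsizes field_simps)
  qed
  moreover have "s\<^sup>2 \<le> (norm (z - zstar))\<^sup>2 - a\<^sup>2 - b\<^sup>2
      + 2 * \<alpha> * inner (gh - g) (zh - zn) + 2 * \<alpha> * inner gh (zstar - zh)
      - 2 * \<beta> * inner (z - zp) (zstar - zh) + 2 * \<tau> * inner (g - gp) (zstar - zn)"
    using extra_point_three_point_inequality[OF closed convex solution_in,
        where z=z and zp=zp and g=g and gh=gh and gp=gp and \<alpha>=\<alpha> and \<beta>=\<beta> and \<tau>=\<tau>]
    unfolding a_def b_def s_def zh_def zn_def \<alpha>_def \<beta>_def \<tau>_def .
  ultimately show ?thesis by argo
qed

lemma extra_point_step:
  fixes z zp g gh gp :: 'a
  assumes z: "z \<in> Z" and zp: "zp \<in> Z"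
  defines "zh \<equiv> closest_point Z (z + (1 / (64 * kappa)) *\<^sub>R (z - zp) - (1 / (4 * L)) *\<^sub>R g)"
    and "zn \<equiv> closest_point Z (z - (1 / (4 * L)) *\<^sub>R gh + (1 / (64 * kappa)) *\<^sub>R (z - zp)
                                - (1 / (64 * L * kappa)) *\<^sub>R (g - gp))"
  shows "(norm (zn - zstar))\<^sup>2 + (norm (zn - z))\<^sup>2 / 16
    \<le> (1 - 1 / (256 * kappa)) * ((norm (z - zstar))\<^sup>2 + (norm (z - zp))\<^sup>2 / 16)
      + (32 * D * norm (gh - F zh) / (63 * L)
         + (16 * (norm (gh - F zh))\<^sup>2 + 20 * (norm (g - F z))\<^sup>2 + 4 * (norm (gp - F zp))\<^sup>2) / (63 * L\<^sup>2))"
proof -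
  define u where "u = \<mu> / L"
  define a b r q s m m' where "a = norm (z - zh)" and "b = norm (zh - zn)" and "r = norm (zh - zstar)"
    and "q = norm (z - zstar)" and "s = norm (zn - zstar)" and "m = norm (z - zp)" and "m' = norm (zn - z)"
  define e eh ep where "e = norm (g - F z) / L" and "eh = norm (gh - F zh) / L" and "ep = norm (gp - F zp) / L"
  have L: "0 < L" by (rule L_pos)
  have u: "0 < u" "u \<le> 1" using mu_pos mu_le_L L by (auto simp: u_def)
  have key: "s\<^sup>2 \<le> q\<^sup>2 - a\<^sup>2 - b\<^sup>2 + (a * b + eh * b + e * b) / 2 - u * r\<^sup>2 / 2 + D * eh / 2
      + (u * (r * m) + u * (s * m) + u * (s * e) + u * (s * ep)) / 32"
    using extra_point_key_inequality[OF z zp zh_def[THEN meta_eq_to_obj_eq] zn_def[THEN meta_eq_to_obj_eq]]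
    unfolding u_def a_def b_def r_def q_def s_def m_def e_def eh_def ep_def .
  have "q \<le> r + a" "m' \<le> a + b"
    using norm_triangle_ineq[of "z - zh" "zh - zstar"] norm_triangle_ineq[of "zn - zh" "zh - z"]
    by (auto simp: q_def r_def a_def m'_def b_def norm_minus_commute)
  from extra_point_scalar_recursion[OF u _ _ _ _ _ this(1) _ this(2) key]
  have "s\<^sup>2 - u * s\<^sup>2 / 64 + m'\<^sup>2 / 16 \<le> q\<^sup>2 - 3 * (u * q\<^sup>2) / 16 + 17 * (u * m\<^sup>2) / 512
      + (D * eh / 2 + (eh\<^sup>2 + e\<^sup>2) / 4 + (e\<^sup>2 + ep\<^sup>2) / 16)"
    by (simp add: a_def b_def r_def m_def q_def m'_def)
  moreover have "0 \<le> D * eh / 2 + (eh\<^sup>2 + e\<^sup>2) / 4 + (e\<^sup>2 + ep\<^sup>2) / 16"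
    using diameter_nonneg L by (simp add: eh_def)
  ultimately have "s\<^sup>2 + m'\<^sup>2 / 16
      \<le> (1 - u / 256) * (q\<^sup>2 + m\<^sup>2 / 16) + 64 / 63 * (D * eh / 2 + (eh\<^sup>2 + e\<^sup>2) / 4 + (e\<^sup>2 + ep\<^sup>2) / 16)"
    using u by (intro potential_contraction) auto
  moreover have "64 / 63 * (D * eh / 2 + (eh\<^sup>2 + e\<^sup>2) / 4 + (e\<^sup>2 + ep\<^sup>2) / 16)
      = 32 * D * norm (gh - F zh) / (63 * L)
        + (16 * (norm (gh - F zh))\<^sup>2 + 20 * (norm (g - F z))\<^sup>2 + 4 * (norm (gp - F zp))\<^sup>2) / (63 * L\<^sup>2)"
    using L by (simp add: e_def eh_def ep_def field_simps power2_eq_square)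
  moreover have rate: "1 / (256 * kappa) = u / 256"
    using L mu_pos by (simp add: u_def)
  ultimately show ?thesis
    unfolding rate s_def[symmetric] m'_def[symmetric] q_def[symmetric] m_def[symmetric] by linarith
qed

end

locale extra_point_scheme =
  fixes Z :: "'a::euclidean_space set" and Fh :: "'a \<Rightarrow> 'b \<Rightarrow> 'a" and M :: "'b measure"
    and \<alpha> \<beta> \<gamma> \<eta> \<tau> :: real and z0 :: 'a
  assumes feasible_closed: "closed Z" and feasible_convex: "convex Z" and initial_feasible: "z0 \<in> Z"
    and oracle_measurable: "(\<lambda>(z, \<xi>). Fh z \<xi>) \<in> borel_measurable (borel \<Otimes>\<^sub>M M)"
begin

abbreviation state :: "(nat \<Rightarrow> 'b) \<Rightarrow> nat \<Rightarrow> 'a \<times> 'a \<times> 'a" where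
  "state w k \<equiv> sep_state Z Fh \<alpha> \<beta> \<gamma> \<eta> \<tau> z0 w k"

abbreviation iterate :: "(nat \<Rightarrow> 'b) \<Rightarrow> nat \<Rightarrow> 'a" where
  "iterate w k \<equiv> sep_iter Z Fh \<alpha> \<beta> \<gamma> \<eta> \<tau> z0 k w"

definition previous :: "(nat \<Rightarrow> 'b) \<Rightarrow> nat \<Rightarrow> 'a" where
  "previous w k = fst (snd (state w k))"

definition previous_oracle :: "(nat \<Rightarrow> 'b) \<Rightarrow> nat \<Rightarrow> 'a" where
  "previous_oracle w k = snd (snd (state w k))"

definition iterate_oracle :: "(nat \<Rightarrow> 'b) \<Rightarrow> nat \<Rightarrow> 'a" where
  "iterate_oracle w k = Fh (iterate w k) (w (2 * k))"

definition half :: "(nat \<Rightarrow> 'b) \<Rightarrow> nat \<Rightarrow> 'a" where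
  "half w k = closest_point Z (iterate w k + \<beta> *\<^sub>R (iterate w k - previous w k) - \<eta> *\<^sub>R iterate_oracle w k)"

definition half_oracle :: "(nat \<Rightarrow> 'b) \<Rightarrow> nat \<Rightarrow> 'a" where
  "half_oracle w k = Fh (half w k) (w (2 * k + 1))"

lemma iterate_0: "iterate w 0 = z0"
  and previous_0: "previous w 0 = z0"
  and previous_oracle_0: "previous_oracle w 0 = Fh z0 (w 0)"
  by (simp_all add: sep_iter_def previous_def previous_oracle_def)

lemma iterate_Suc: "iterate w (Suc k) = closest_point Z (iterate w k - \<alpha> *\<^sub>R half_oracle w k
      + \<gamma> *\<^sub>R (iterate w k - previous w k) - \<tau> *\<^sub>R (iterate_oracle w k - previous_oracle w k))"
  and previous_Suc: "previous w (Suc k) = iterate w k"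
  and previous_oracle_Suc: "previous_oracle w (Suc k) = iterate_oracle w k"
  by (simp_all add: sep_iter_def previous_def previous_oracle_def iterate_oracle_def half_oracle_def half_def
      Let_def split_beta)

lemma feasible_nonempty: "Z \<noteq> {}"
  using initial_feasible by blast

lemma iterate_in: "iterate w k \<in> Z" and previous_in: "previous w k \<in> Z"
  by (induction k) (auto simp: iterate_0 previous_0 iterate_Suc previous_Suc initial_feasible
      closest_point_in_set[OF feasible_closed feasible_nonempty])

lemma half_in: "half w k \<in> Z"
  unfolding half_def by (rule closest_point_in_set[OF feasible_closed feasible_nonempty])

lemma state_prefix: "(\<And>i. i < 2 * k \<or> i = 0 \<Longrightarrow> w i = w' i) \<Longrightarrow> state w k = state w' k"
proof (induction k)
  case (Suc k)
  have "state w k = state w' k" using Suc.prems by (intro Suc.IH) auto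
  moreover have "w (2 * k) = w' (2 * k)" "w (2 * k + 1) = w' (2 * k + 1)" using Suc.prems by auto
  ultimately show ?case by (simp add: Let_def split_beta)
qed simp

lemma iterate_prefix:
  assumes "\<And>i. i < 2 * k \<Longrightarrow> w i = w' i"
  shows "iterate w k = iterate w' k"
proof (cases k)
  case (Suc j)
  then have "state w k = state w' k" using assms by (intro state_prefix) auto
  then show ?thesis by (simp add: sep_iter_def)
qed (simp add: sep_iter_def)

lemma half_prefix:
  assumes "\<And>i. i < 2 * k + 1 \<Longrightarrow> w i = w' i"
  shows "half w k = half w' k"
proof -
  have "state w k = state w' k" using assms by (intro state_prefix) auto
  moreover have "w (2 * k) = w' (2 * k)" using assms by simp
  ultimately show ?thesis by (simp add: half_def iterate_oracle_def previous_def sep_iter_def)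
qed

abbreviation samples :: "(nat \<Rightarrow> 'b) measure" where
  "samples \<equiv> \<Pi>\<^sub>M i\<in>UNIV. M"

lemma closest_point_measurable[measurable]: "closest_point Z \<in> borel_measurable borel"
  using continuous_on_closest_point[OF feasible_convex feasible_closed feasible_nonempty]
  by (rule borel_measurable_continuous_onI)

lemma oracle_compose_measurable[measurable (raw)]:
  assumes "\<phi> \<in> borel_measurable N" and "\<psi> \<in> measurable N M"
  shows "(\<lambda>x. Fh (\<phi> x) (\<psi> x)) \<in> borel_measurable N"
  using measurable_comp[OF measurable_Pair[OF assms] oracle_measurable] by (simp add: comp_def)

lemma sample_measurable[measurable]: "(\<lambda>w. w i) \<in> measurable samples M"
  by (rule measurable_component_singleton) simp

lemma state_measurable:
  "(\<lambda>w. iterate w k) \<in> borel_measurable samples \<and> (\<lambda>w. previous w k) \<in> borel_measurable samples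
    \<and> (\<lambda>w. previous_oracle w k) \<in> borel_measurable samples"
proof (induction k)
  case 0
  show ?case by (simp add: iterate_0 previous_0 previous_oracle_0)
next
  case (Suc k)
  then have [measurable]: "(\<lambda>w. iterate w k) \<in> borel_measurable samples"
    "(\<lambda>w. previous w k) \<in> borel_measurable samples" "(\<lambda>w. previous_oracle w k) \<in> borel_measurable samples"
    by auto
  show ?case
    unfolding iterate_Suc previous_Suc previous_oracle_Suc half_oracle_def half_def iterate_oracle_def
    by measurable
qed

lemma iterates_measurable[measurable]:
  "(\<lambda>w. iterate w k) \<in> borel_measurable samples" "(\<lambda>w. previous w k) \<in> borel_measurable samples"
  "(\<lambda>w. previous_oracle w k) \<in> borel_measurable samples" "(\<lambda>w. iterate_oracle w k) \<in> borel_measurable samples"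
  "(\<lambda>w. half w k) \<in> borel_measurable samples" "(\<lambda>w. half_oracle w k) \<in> borel_measurable samples"
proof -
  show [measurable]: "(\<lambda>w. iterate w k) \<in> borel_measurable samples"
    "(\<lambda>w. previous w k) \<in> borel_measurable samples" "(\<lambda>w. previous_oracle w k) \<in> borel_measurable samples"
    using state_measurable[of k] by auto
  show [measurable]: "(\<lambda>w. iterate_oracle w k) \<in> borel_measurable samples"
    unfolding iterate_oracle_def by measurable
  show [measurable]: "(\<lambda>w. half w k) \<in> borel_measurable samples"
    unfolding half_def by measurable
  show "(\<lambda>w. half_oracle w k) \<in> borel_measurable samples"
    unfolding half_oracle_def by measurable
qed

end

locale stochastic_extra_point =
  strongly_monotone_vi Z F D L \<mu> zstar +
  extra_point_scheme Z Fhat M "1 / (4 * L)" "1 / (64 * (L / \<mu>))" "1 / (64 * (L / \<mu>))" "1 / (4 * L)"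
    "1 / (64 * L * (L / \<mu>))" z0
  for Z :: "'a::euclidean_space set" and F D L \<mu> zstar and Fhat :: "'a \<Rightarrow> 'b \<Rightarrow> 'a" and M z0 +
  fixes \<delta> \<sigma> :: real
  assumes sample_space: "prob_space M" and bias_nonneg: "0 \<le> \<delta>"
    and oracle_bias: "\<forall>z\<in>Z. (\<integral>\<^sup>+ \<xi>. ennreal (norm (Fhat z \<xi> - F z)) \<partial>M) \<le> ennreal \<delta>"
    and oracle_variance: "\<forall>z\<in>Z. (\<integral>\<^sup>+ \<xi>. ennreal ((norm (Fhat z \<xi> - F z))\<^sup>2) \<partial>M) \<le> ennreal (\<sigma>\<^sup>2)"
begin

lemma expected_oracle_error_le:
  fixes f :: "(nat \<Rightarrow> 'b) \<Rightarrow> 'a" and h :: "'a \<Rightarrow> real"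
  assumes f: "f \<in> borel_measurable samples" and prefix: "\<And>w w'. (\<And>i. i < n \<Longrightarrow> w i = w' i) \<Longrightarrow> f w = f w'"
    and feasible: "\<And>w. f w \<in> Z" and h[measurable]: "h \<in> borel_measurable borel"
    and bound: "\<forall>z\<in>Z. (\<integral>\<^sup>+ \<xi>. ennreal (h (Fhat z \<xi> - F z)) \<partial>M) \<le> c"
  shows "(\<integral>\<^sup>+ w. ennreal (h (Fhat (f w) (w n) - F (f w))) \<partial>samples) \<le> c"
proof -
  note [measurable] = borel_measurable_F_closest_point
  define G where "G z \<xi> = ennreal (h (Fhat z \<xi> - F (closest_point Z z)))" for z \<xi>
  have G_feasible: "G z \<xi> = ennreal (h (Fhat z \<xi> - F z))" if "z \<in> Z" for z \<xi>
    using that by (simp add: G_def closest_point_self)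
  have "(\<lambda>(z, \<xi>). G z \<xi>) \<in> borel_measurable (borel \<Otimes>\<^sub>M M)"
    unfolding G_def by measurable
  from nn_integral_fresh_coordinate_le[OF sample_space f prefix this]
  have "(\<integral>\<^sup>+ w. G (f w) (w n) \<partial>samples) \<le> c"
    using bound feasible by (simp add: G_feasible)
  then show ?thesis using feasible by (simp add: G_feasible)
qed

definition iterate_error :: "(nat \<Rightarrow> 'b) \<Rightarrow> nat \<Rightarrow> real" where
  "iterate_error w k = norm (iterate_oracle w k - F (iterate w k))"

definition half_error :: "(nat \<Rightarrow> 'b) \<Rightarrow> nat \<Rightarrow> real" where
  "half_error w k = norm (half_oracle w k - F (half w k))"

definition previous_error :: "(nat \<Rightarrow> 'b) \<Rightarrow> nat \<Rightarrow> real" where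
  "previous_error w k = norm (previous_oracle w k - F (previous w k))"

lemma errors_measurable[measurable]:
  "(\<lambda>w. iterate_error w k) \<in> borel_measurable samples" "(\<lambda>w. half_error w k) \<in> borel_measurable samples"
  "(\<lambda>w. previous_error w k) \<in> borel_measurable samples"
proof -
  have "(\<lambda>w. F (iterate w k)) \<in> borel_measurable samples"
    "(\<lambda>w. F (half w k)) \<in> borel_measurable samples" "(\<lambda>w. F (previous w k)) \<in> borel_measurable samples"
    using iterate_in half_in previous_in by (intro F_feasible_measurable iterates_measurable; simp)+
  then show "(\<lambda>w. iterate_error w k) \<in> borel_measurable samples" "(\<lambda>w. half_error w k) \<in> borel_measurable samples"
    "(\<lambda>w. previous_error w k) \<in> borel_measurable samples"
    unfolding iterate_error_def half_error_def previous_error_def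
    by (intro measurable_compose[OF _ borel_measurable_norm] borel_measurable_diff iterates_measurable; simp)+
qed

lemma expected_iterate_error_sq_le: "(\<integral>\<^sup>+ w. ennreal ((iterate_error w k)\<^sup>2) \<partial>samples) \<le> ennreal (\<sigma>\<^sup>2)"
  unfolding iterate_error_def iterate_oracle_def
  by (rule expected_oracle_error_le[where h="\<lambda>v. (norm v)\<^sup>2",
        OF iterates_measurable(1) iterate_prefix iterate_in _ oracle_variance]) measurable

lemma expected_half_error_sq_le: "(\<integral>\<^sup>+ w. ennreal ((half_error w k)\<^sup>2) \<partial>samples) \<le> ennreal (\<sigma>\<^sup>2)"
  unfolding half_error_def half_oracle_def
  by (rule expected_oracle_error_le[where h="\<lambda>v. (norm v)\<^sup>2",
        OF iterates_measurable(5) half_prefix half_in _ oracle_variance]) measurable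

lemma expected_half_error_le: "(\<integral>\<^sup>+ w. ennreal (half_error w k) \<partial>samples) \<le> ennreal \<delta>"
  unfolding half_error_def half_oracle_def
  by (rule expected_oracle_error_le[where h=norm,
        OF iterates_measurable(5) half_prefix half_in _ oracle_bias]) measurable

lemma expected_previous_error_sq_le: "(\<integral>\<^sup>+ w. ennreal ((previous_error w k)\<^sup>2) \<partial>samples) \<le> ennreal (\<sigma>\<^sup>2)"
proof (cases k)
  case 0
  have "(\<integral>\<^sup>+ w. ennreal ((norm (Fhat z0 (w 0) - F z0))\<^sup>2) \<partial>samples) \<le> ennreal (\<sigma>\<^sup>2)"
    by (rule expected_oracle_error_le[where f="\<lambda>_. z0" and h="\<lambda>v. (norm v)\<^sup>2",
          OF _ _ initial_feasible _ oracle_variance]) simp_all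
  then show ?thesis unfolding 0 previous_error_def previous_0 previous_oracle_0 .
next
  case (Suc j)
  show ?thesis using expected_iterate_error_sq_le[of j]
    unfolding Suc previous_error_def iterate_error_def previous_Suc previous_oracle_Suc .
qed

lemma errors_nonneg[simp]: "0 \<le> iterate_error w k" "0 \<le> half_error w k" "0 \<le> previous_error w k"
  by (simp_all add: iterate_error_def half_error_def previous_error_def)

definition potential :: "(nat \<Rightarrow> 'b) \<Rightarrow> nat \<Rightarrow> real" where
  "potential w k = (norm (iterate w k - zstar))\<^sup>2 + (norm (iterate w k - previous w k))\<^sup>2 / 16"

definition noise :: "(nat \<Rightarrow> 'b) \<Rightarrow> nat \<Rightarrow> real" where
  "noise w k = 32 * D * half_error w k / (63 * L)
     + (16 * (half_error w k)\<^sup>2 + 20 * (iterate_error w k)\<^sup>2 + 4 * (previous_error w k)\<^sup>2) / (63 * L\<^sup>2)"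

lemma potential_nonneg[simp]: "0 \<le> potential w k"
  by (simp add: potential_def)

lemma noise_nonneg[simp]: "0 \<le> noise w k"
  using diameter_nonneg L_pos by (simp add: noise_def)

lemma potential_measurable[measurable]: "(\<lambda>w. potential w k) \<in> borel_measurable samples"
  unfolding potential_def
  by (intro borel_measurable_add borel_measurable_divide borel_measurable_power borel_measurable_diff
      measurable_compose[OF _ borel_measurable_norm] iterates_measurable borel_measurable_const)

lemma noise_measurable[measurable]: "(\<lambda>w. noise w k) \<in> borel_measurable samples"
  unfolding noise_def
  by (intro borel_measurable_add borel_measurable_divide borel_measurable_power borel_measurable_times
      errors_measurable borel_measurable_const)

lemma potential_Suc_le: "potential w (Suc k) \<le> (1 - 1 / (256 * kappa)) * potential w k + noise w k"
  using extra_point_step[OF iterate_in[where w=w and k=k] previous_in[where w=w and k=k],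
      where g="iterate_oracle w k" and gh="half_oracle w k" and gp="previous_oracle w k", folded half_def]
  unfolding potential_def noise_def iterate_Suc previous_Suc half_error_def iterate_error_def
    previous_error_def .

lemma expected_noise_le:
  "(\<integral>\<^sup>+ w. ennreal (noise w k) \<partial>samples) \<le> ennreal (40 * \<sigma>\<^sup>2 / (63 * L\<^sup>2) + 32 * \<delta> * D / (63 * L))"
proof -
  define c where "c = 1 / (63 * L\<^sup>2)"
  define d where "d = 32 * D / (63 * L)"
  have c: "0 \<le> c" and d: "0 \<le> d"
    using L_pos diameter_nonneg by (simp_all add: c_def d_def)
  have noise_eq: "noise w k = d * half_error w k + 16 * c * (half_error w k)\<^sup>2
      + 20 * c * (iterate_error w k)\<^sup>2 + 4 * c * (previous_error w k)\<^sup>2" for w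
    using L_pos unfolding noise_def c_def d_def by (simp add: field_simps)
  have "(\<integral>\<^sup>+ w. ennreal (noise w k) \<partial>samples)
      = (\<integral>\<^sup>+ w. ennreal d * half_error w k + ennreal (16 * c) * (half_error w k)\<^sup>2
          + ennreal (20 * c) * (iterate_error w k)\<^sup>2 + ennreal (4 * c) * (previous_error w k)\<^sup>2 \<partial>samples)"
    using c d by (simp add: noise_eq ennreal_plus ennreal_mult)
  also have "\<dots> = ennreal d * (\<integral>\<^sup>+ w. half_error w k \<partial>samples)
      + ennreal (16 * c) * (\<integral>\<^sup>+ w. (half_error w k)\<^sup>2 \<partial>samples)
      + ennreal (20 * c) * (\<integral>\<^sup>+ w. (iterate_error w k)\<^sup>2 \<partial>samples)
      + ennreal (4 * c) * (\<integral>\<^sup>+ w. (previous_error w k)\<^sup>2 \<partial>samples)"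
    by (simp add: nn_integral_add nn_integral_cmult)
  also have "\<dots> \<le> ennreal d * \<delta> + ennreal (16 * c) * \<sigma>\<^sup>2 + ennreal (20 * c) * \<sigma>\<^sup>2 + ennreal (4 * c) * \<sigma>\<^sup>2"
    by (intro add_mono mult_left_mono expected_half_error_le expected_half_error_sq_le
        expected_iterate_error_sq_le expected_previous_error_sq_le) simp_all
  also have "\<dots> = ennreal (d * \<delta> + 16 * c * \<sigma>\<^sup>2 + 20 * c * \<sigma>\<^sup>2 + 4 * c * \<sigma>\<^sup>2)"
    using c d bias_nonneg by (simp add: ennreal_plus ennreal_mult mult.assoc flip: distrib_right)
  also have "d * \<delta> + 16 * c * \<sigma>\<^sup>2 + 20 * c * \<sigma>\<^sup>2 + 4 * c * \<sigma>\<^sup>2 = 40 * \<sigma>\<^sup>2 / (63 * L\<^sup>2) + 32 * \<delta> * D / (63 * L)"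
    by (simp add: c_def d_def field_simps)
  finally show ?thesis .
qed

lemma samples_emeasure_space: "emeasure samples (space samples) = 1"
proof -
  interpret product_prob_space "\<lambda>_. M" UNIV
    using sample_space by (rule product_prob_spaceI)
  show ?thesis by (rule emeasure_space_1)
qed

lemma expected_potential_le:
  "(\<integral>\<^sup>+ w. ennreal (potential w k) \<partial>samples)
    \<le> ennreal ((1 - 1 / (256 * kappa)) ^ k * (norm (z0 - zstar))\<^sup>2
               + (40 * \<sigma>\<^sup>2 / (63 * L\<^sup>2) + 32 * \<delta> * D / (63 * L)) * (256 * kappa))"
proof -
  define \<rho> where "\<rho> = 1 - 1 / (256 * kappa)"
  define C where "C = 40 * \<sigma>\<^sup>2 / (63 * L\<^sup>2) + 32 * \<delta> * D / (63 * L)"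
  have \<rho>: "0 \<le> \<rho>" "\<rho> * (C * (256 * kappa)) + C = C * (256 * kappa)"
    using contraction_factor_nonneg mu_pos L_pos by (simp_all add: \<rho>_def field_simps)
  have C: "0 \<le> C" "0 \<le> C * (256 * kappa)"
    using mu_pos L_pos bias_nonneg diameter_nonneg by (simp_all add: C_def)
  show ?thesis
    unfolding \<rho>_def[symmetric] C_def[symmetric]
  proof (induction k)
    case 0
    have "(\<integral>\<^sup>+ w. ennreal (potential w 0) \<partial>samples) = ennreal ((norm (z0 - zstar))\<^sup>2)"
      unfolding potential_def iterate_0 previous_0 by (simp add: samples_emeasure_space)
    also have "\<dots> \<le> ennreal (\<rho> ^ 0 * (norm (z0 - zstar))\<^sup>2 + C * (256 * kappa))"
      using C by (intro ennreal_leI) simp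
    finally show ?case .
  next
    case (Suc k)
    have "(\<integral>\<^sup>+ w. ennreal (potential w (Suc k)) \<partial>samples)
        \<le> (\<integral>\<^sup>+ w. ennreal \<rho> * potential w k + noise w k \<partial>samples)"
    proof (intro nn_integral_mono)
      fix w
      have "ennreal (potential w (Suc k)) \<le> ennreal (\<rho> * potential w k + noise w k)"
        unfolding \<rho>_def by (intro ennreal_leI potential_Suc_le)
      then show "ennreal (potential w (Suc k)) \<le> ennreal \<rho> * potential w k + noise w k"
        using \<rho> by (simp add: ennreal_plus ennreal_mult)
    qed
    also have "\<dots> = ennreal \<rho> * (\<integral>\<^sup>+ w. potential w k \<partial>samples) + (\<integral>\<^sup>+ w. noise w k \<partial>samples)"
      by (simp add: nn_integral_add nn_integral_cmult)
    also have "\<dots> \<le> ennreal \<rho> * ennreal (\<rho> ^ k * (norm (z0 - zstar))\<^sup>2 + C * (256 * kappa)) + ennreal C"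
      using Suc.IH expected_noise_le[of k, folded C_def] by (intro add_mono mult_left_mono) auto
    also have "\<dots> = ennreal (\<rho> * (\<rho> ^ k * (norm (z0 - zstar))\<^sup>2 + C * (256 * kappa)) + C)"
      using \<rho> C by (simp add: ennreal_plus ennreal_mult)
    also have "\<rho> * (\<rho> ^ k * (norm (z0 - zstar))\<^sup>2 + C * (256 * kappa)) + C
        = \<rho> ^ Suc k * (norm (z0 - zstar))\<^sup>2 + C * (256 * kappa)"
      using \<rho>(2) by (simp add: algebra_simps)
    finally show ?case .
  qed
qed

end

theorem proposition1:
  fixes Z :: "'a::euclidean_space set"
    and F :: "'a \<Rightarrow> 'a"
    and Fhat :: "'a \<Rightarrow> 'b \<Rightarrow> 'a"
    and M :: "'b measure"
    and D L \<mu> \<delta> \<sigma> :: real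
    and zstar z0 :: 'a
  assumes Z_closed: "closed Z" and Z_convex: "convex Z" and Z_ne: "Z \<noteq> {}"
    and Z_diam: "\<forall>z\<in>Z. \<forall>z'\<in>Z. norm (z - z') \<le> D"
    and F_strmono: "\<forall>z\<in>Z. \<forall>z'\<in>Z. (F z - F z') \<bullet> (z - z') \<ge> \<mu> * (norm (z - z'))\<^sup>2"
    and F_lip: "\<forall>z\<in>Z. \<forall>z'\<in>Z. norm (F z - F z') \<le> L * norm (z - z')"
    and mu_pos: "0 < \<mu>" and mu_le_L: "\<mu> \<le> L"
    and zstar_in: "zstar \<in> Z"
    and zstar_sol: "\<forall>z\<in>Z. F zstar \<bullet> (z - zstar) \<ge> 0"
    and M_prob: "prob_space M"
    and Fhat_meas: "(\<lambda>(z, \<xi>). Fhat z \<xi>) \<in> borel_measurable (borel \<Otimes>\<^sub>M M)"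
    and delta_nonneg: "0 \<le> \<delta>" and sigma_nonneg: "0 \<le> \<sigma>"
    and oracle_bias: "\<forall>z\<in>Z. (\<integral>\<^sup>+ \<xi>. ennreal (norm (Fhat z \<xi> - F z)) \<partial>M) \<le> ennreal \<delta>"
    and oracle_var: "\<forall>z\<in>Z. (\<integral>\<^sup>+ \<xi>. ennreal ((norm (Fhat z \<xi> - F z))\<^sup>2) \<partial>M) \<le> ennreal (\<sigma>\<^sup>2)"
    and z0_in: "z0 \<in> Z"
  shows "\<forall>k::nat.
    (\<integral>\<^sup>+ w. ennreal ((norm (sep_iter Z Fhat (1 / (4 * L)) (1 / (64 * (L / \<mu>)))
                              (1 / (64 * (L / \<mu>))) (1 / (4 * L)) (1 / (64 * L * (L / \<mu>)))
                              z0 k w - zstar))\<^sup>2)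
        \<partial>(\<Pi>\<^sub>M i\<in>(UNIV::nat set). M))
    \<le> ennreal ((1 - 1 / (256 * (L / \<mu>))) ^ k * (283 / 256) * (norm (z0 - zstar))\<^sup>2
               + (40 * \<sigma>\<^sup>2 / (63 * L\<^sup>2) + 32 * \<delta> * D / (63 * L)) * (256 * (L / \<mu>)))"
proof
  fix k
  interpret stochastic_extra_point Z F D L \<mu> zstar Fhat M z0 \<delta> \<sigma>
    by (intro stochastic_extra_point.intro strongly_monotone_vi.intro extra_point_scheme.intro
        stochastic_extra_point_axioms.intro) (use assms in auto)
  have "(\<integral>\<^sup>+ w. ennreal ((norm (iterate w k - zstar))\<^sup>2) \<partial>samples) \<le> (\<integral>\<^sup>+ w. ennreal (potential w k) \<partial>samples)"
    by (intro nn_integral_mono ennreal_leI) (simp add: potential_def)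
  also have "\<dots> \<le> ennreal ((1 - 1 / (256 * kappa)) ^ k * (norm (z0 - zstar))\<^sup>2
      + (40 * \<sigma>\<^sup>2 / (63 * L\<^sup>2) + 32 * \<delta> * D / (63 * L)) * (256 * kappa))"
    by (rule expected_potential_le)
  also have "\<dots> \<le> ennreal ((1 - 1 / (256 * kappa)) ^ k * (283 / 256) * (norm (z0 - zstar))\<^sup>2
      + (40 * \<sigma>\<^sup>2 / (63 * L\<^sup>2) + 32 * \<delta> * D / (63 * L)) * (256 * kappa))"
    using contraction_factor_nonneg by (intro ennreal_leI add_right_mono) simp
  finally show "(\<integral>\<^sup>+ w. ennreal ((norm (iterate w k - zstar))\<^sup>2) \<partial>samples)
      \<le> ennreal ((1 - 1 / (256 * kappa)) ^ k * (283 / 256) * (norm (z0 - zstar))\<^sup>2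
        + (40 * \<sigma>\<^sup>2 / (63 * L\<^sup>2) + 32 * \<delta> * D / (63 * L)) * (256 * kappa))" .
qed

end
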